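(* Let $\lambda\in\mathbb C$ with $\lambda\ne1$ and $\Re(\lambda)>0$, and let $Z$ be a complex random variable with $\mathbb E|Z|<\infty$, $\mathbb EZ\ne0$ and $Z\overset{\mathcal L}{=}e^{-\lambda T}(Z^{(1)}+\dots+Z^{(m)})$, where $Z^{(1)},\dots,Z^{(m)}$ are independent copies of $Z$ independent of $T$. Let $\varphi(t)=\mathbb E e^{i\langle t,Z\rangle}$ ($t\in\mathbb C$) and $\psi(r)=\max_{|t|=r}|\varphi(t)|$ for $r\ge0$. Then $\lim_{r\to+\infty}\psi(r)=0$.
   Context: $m\ge2$ is an integer. $T=\tau_{(1)}+\dots+\tau_{(m-1)}$ where the $\tau_{(j)}$ are independent and $\tau_{(j)}$ is exponential with parameter $j$. For $x,y\in\mathbb C$, $\langle x,y\rangle=\Re(\overline xy)$. *)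

theory Defs
  imports "HOL-Probability.Probability"
begin

definition cinner :: "complex \<Rightarrow> complex \<Rightarrow> real" where
  "cinner x y = Re (cnj x * y)"

end

theory Submission
  imports Defs
begin

text \<open>
  The characteristic function \<phi> of the fixed point satisfies \<phi>(t) = E \<phi>(exp(-conj(\<lambda>) T) t)^m.
  Hence the tail supremum \<psi>(r) = sup {|\<phi>(t)| : |t| \<ge> r} satisfies \<psi>(r) \<le> E \<psi>(r exp(-Re(\<lambda>) T))^m,
  so its limit L obeys L \<le> L^m and is 0 or 1. If L = 1, there are t_n \<rightarrow> \<infinity> with |\<phi>(t_n)| \<rightarrow> 1.
  As 1 - |\<phi>(v)|^2 is the mean of 1 - cos \<langle>v, Z - Z'\<rangle> over two independent copies, the inequality
  then forces Z = Z' almost surely, provided the law of T spreads every large spiral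
  s \<mapsto> c exp(-\<lambda> s) over the phases. It does because Im \<lambda> \<noteq> 0, which follows from E Z \<noteq> 0,
  \<lambda> \<noteq> 1 and the Laplace transform of T. Finally Z is no point mass, as T is not almost surely constant.
\<close>

section \<open>Characteristic functions of laws on \<open>\<complex>\<close>\<close>

definition char_fun :: "complex measure \<Rightarrow> complex \<Rightarrow> complex" where
  "char_fun \<mu> t = (LINT z|\<mu>. exp (\<i> * complex_of_real (cinner t z)))"

lemma cinner_Re_Im: "cinner x y = Re x * Re y + Im x * Im y"
  unfolding cinner_def by simp

lemma borel_measurable_cinner [measurable]:
  assumes [measurable]: "f \<in> borel_measurable N" "g \<in> borel_measurable N"
  shows "(\<lambda>x. cinner (f x) (g x)) \<in> borel_measurable N"
  unfolding cinner_Re_Im by measurable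

lemma cinner_diff_right: "cinner v z - cinner v z' = cinner v (z - z')"
  unfolding cinner_Re_Im by (simp add: algebra_simps)

lemma cinner_sum_right: "cinner u (\<Sum>j\<in>J. f j) = (\<Sum>j\<in>J. cinner u (f j))"
  by (simp add: cinner_Re_Im Re_sum Im_sum sum_distrib_left sum.distrib)

lemma cinner_mult_right: "cinner t (e * z) = cinner (cnj e * t) z"
  by (simp add: cinner_def algebra_simps)

lemma AE_liminf_eq_0:
  fixes f :: "nat \<Rightarrow> 'a \<Rightarrow> ennreal"
  assumes "\<And>n. f n \<in> borel_measurable M" and "liminf (\<lambda>n. \<integral>\<^sup>+ x. f n x \<partial>M) = 0"
  shows "AE x in M. liminf (\<lambda>n. f n x) = 0"
proof -
  have "(\<integral>\<^sup>+ x. liminf (\<lambda>n. f n x) \<partial>M) = 0"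
    using nn_integral_liminf[of f, OF assms(1)] assms(2) by simp
  then show ?thesis
    by (subst (asm) nn_integral_0_iff_AE) (use assms(1) in measurable)
qed

lemma (in prob_space) AE_const_of_AE_AE_eq:
  assumes "AE x in M. AE y in M. y = x"
  shows "\<exists>c. AE y in M. y = c"
proof -
  have "AE x in M. \<exists>c. AE y in M. y = c"
    using assms by eventually_elim blast
  then show ?thesis by simp
qed

locale complex_law = prob_space \<mu> for \<mu> :: "complex measure" +
  assumes sets_law: "sets \<mu> = sets borel"
begin

lemmas [measurable_cong] = sets_law

lemma integrable_char_fun_integrand: "integrable \<mu> (\<lambda>z. exp (\<i> * complex_of_real (cinner t z)))"
  by (rule integrable_const_bound[where B=1]) auto

lemma norm_char_fun_le_1: "cmod (char_fun \<mu> t) \<le> 1"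
proof -
  have "cmod (char_fun \<mu> t) \<le> (LINT z|\<mu>. cmod (exp (\<i> * complex_of_real (cinner t z))))"
    unfolding char_fun_def by (rule integral_norm_bound)
  then show ?thesis by (simp add: prob_space)
qed

lemma borel_measurable_char_fun [measurable]:
  assumes [measurable]: "f \<in> borel_measurable N"
  shows "(\<lambda>s. char_fun \<mu> (f s)) \<in> borel_measurable N"
proof -
  have "(\<lambda>(s, z). exp (\<i> * complex_of_real (cinner (f s) z))) \<in> borel_measurable (N \<Otimes>\<^sub>M \<mu>)"
    by (simp add: measurable_cong_sets[OF sets_pair_measure_cong[OF refl sets_law] refl] case_prod_beta)
  then show ?thesis
    unfolding char_fun_def by (rule borel_measurable_lebesgue_integral)
qed

lemma integrable_integral_section:
  fixes f :: "complex \<Rightarrow> complex \<Rightarrow> 'b::{banach, second_countable_topology}"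
  assumes f: "(\<lambda>(z, z'). f z z') \<in> borel_measurable (\<mu> \<Otimes>\<^sub>M \<mu>)" and bound: "\<And>z z'. norm (f z z') \<le> B"
  shows "integrable \<mu> (f z)" and "integrable \<mu> (\<lambda>z. LINT z'|\<mu>. f z z')"
proof -
  have "f z \<in> borel_measurable \<mu>" for z
    using measurable_Pair2[OF f, of z] by (simp add: sets_eq_imp_space_eq[OF sets_law])
  then have int_section: "integrable \<mu> (f z)" for z
    using bound by (intro integrable_const_bound[where B=B]) auto
  then show "integrable \<mu> (f z)" .
  have "norm (LINT z'|\<mu>. f z z') \<le> B" for z
  proof -
    have "norm (LINT z'|\<mu>. f z z') \<le> (LINT z'|\<mu>. norm (f z z'))"
      by (rule integral_norm_bound)
    also have "\<dots> \<le> B"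
      using int_section bound by (intro integral_le_const) auto
    finally show ?thesis .
  qed
  then show "integrable \<mu> (\<lambda>z. LINT z'|\<mu>. f z z')"
    using borel_measurable_lebesgue_integral[OF f] by (intro integrable_const_bound[where B=B]) auto
qed

lemma char_fun_defect_eq:
  "1 - cmod (char_fun \<mu> v) ^ 2 = (LINT z|\<mu>. LINT z'|\<mu>. 1 - cos (cinner v (z - z')))"
proof -
  define e where "e z = exp (\<i> * complex_of_real (cinner v z))" for z
  define E where "E z z' = exp (\<i> * complex_of_real (cinner v (z - z')))" for z z'
  have meas_E: "(\<lambda>(z, z'). E z z') \<in> borel_measurable (\<mu> \<Otimes>\<^sub>M \<mu>)"
    and meas_cos: "(\<lambda>(z, z'). cos (cinner v (z - z'))) \<in> borel_measurable (\<mu> \<Otimes>\<^sub>M \<mu>)"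
    unfolding E_def by measurable
  note int_E = integrable_integral_section[OF meas_E, where B=1]
  note int_cos = integrable_integral_section[OF meas_cos, where B=1]
  have e_mult_cnj: "e z * cnj (e z') = E z z'" for z z'
    unfolding e_def E_def cinner_diff_right[symmetric] by (simp add: exp_cnj exp_add[symmetric] algebra_simps)
  have "complex_of_real (cmod (char_fun \<mu> v) ^ 2) = (LINT z|\<mu>. e z) * cnj (LINT z'|\<mu>. e z')"
    unfolding char_fun_def e_def by (rule complex_norm_square)
  also have "\<dots> = (LINT z|\<mu>. LINT z'|\<mu>. E z z')"
    by (simp add: e_mult_cnj[symmetric] integral_cnj)
  finally have "cmod (char_fun \<mu> v) ^ 2 = Re (LINT z|\<mu>. LINT z'|\<mu>. E z z')"
    by (metis Re_complex_of_real)
  also have "\<dots> = (LINT z|\<mu>. LINT z'|\<mu>. cos (cinner v (z - z')))"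
    using int_E by (simp add: integral_Re[symmetric] E_def Re_exp)
  finally show ?thesis
    using int_cos by (simp add: prob_space)
qed

lemma nn_integral_char_fun_defect:
  "(\<integral>\<^sup>+ z. \<integral>\<^sup>+ z'. ennreal (1 - cos (cinner v (z - z'))) \<partial>\<mu> \<partial>\<mu>) = ennreal (1 - cmod (char_fun \<mu> v) ^ 2)"
proof -
  have "(\<lambda>(z, z'). 1 - cos (cinner v (z - z'))) \<in> borel_measurable (\<mu> \<Otimes>\<^sub>M \<mu>)"
    by measurable
  note int = integrable_integral_section[OF this, where B=2]
  have "(\<integral>\<^sup>+ z. \<integral>\<^sup>+ z'. ennreal (1 - cos (cinner v (z - z'))) \<partial>\<mu> \<partial>\<mu>)
      = (\<integral>\<^sup>+ z. ennreal (LINT z'|\<mu>. 1 - cos (cinner v (z - z'))) \<partial>\<mu>)"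
    using int(1) by (simp add: nn_integral_eq_integral)
  also have "\<dots> = ennreal (LINT z|\<mu>. LINT z'|\<mu>. 1 - cos (cinner v (z - z')))"
    using int(2) by (rule nn_integral_eq_integral) (auto intro!: integral_nonneg_AE)
  finally show ?thesis by (simp add: char_fun_defect_eq)
qed

definition char_fun_tail :: "real \<Rightarrow> real" where
  "char_fun_tail r = Sup {cmod (char_fun \<mu> t) | t. r \<le> cmod t}"

lemma char_fun_tail_set_nonempty: "{cmod (char_fun \<mu> t) | t. r \<le> cmod t} \<noteq> {}"
proof -
  have "r \<le> cmod (complex_of_real \<bar>r\<bar>)" by simp
  then show ?thesis by blast
qed

lemma bdd_above_char_fun_tail_set: "bdd_above {cmod (char_fun \<mu> t) | t. r \<le> cmod t}"
  using norm_char_fun_le_1 by (auto intro!: bdd_aboveI[where M=1])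

lemma char_fun_le_tail: "r \<le> cmod t \<Longrightarrow> cmod (char_fun \<mu> t) \<le> char_fun_tail r"
  unfolding char_fun_tail_def by (rule cSup_upper[OF _ bdd_above_char_fun_tail_set]) blast

lemma char_fun_tail_le_1: "char_fun_tail r \<le> 1"
  unfolding char_fun_tail_def using norm_char_fun_le_1
  by (intro cSup_least[OF char_fun_tail_set_nonempty]) auto

lemma char_fun_tail_nonneg: "0 \<le> char_fun_tail r"
proof -
  have "cmod (char_fun \<mu> (complex_of_real \<bar>r\<bar>)) \<le> char_fun_tail r"
    by (rule char_fun_le_tail) simp
  then show ?thesis by (rule order_trans[OF norm_ge_zero])
qed

lemma char_fun_tail_antimono: "r1 \<le> r2 \<Longrightarrow> char_fun_tail r2 \<le> char_fun_tail r1"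
  unfolding char_fun_tail_def
  by (rule cSup_subset_mono[OF char_fun_tail_set_nonempty bdd_above_char_fun_tail_set]) auto

lemma borel_measurable_char_fun_tail [measurable]: "char_fun_tail \<in> borel_measurable borel"
proof -
  have "mono (\<lambda>r. - char_fun_tail r)" by (auto intro!: monoI char_fun_tail_antimono)
  from borel_measurable_mono[OF this] have "(\<lambda>r. - (- char_fun_tail r)) \<in> borel_measurable borel"
    by measurable
  then show ?thesis by simp
qed

lemma char_fun_tail_tendsto_Inf: "(char_fun_tail \<longlongrightarrow> Inf (range char_fun_tail)) at_top"
proof (rule order_tendstoI)
  have bdd: "bdd_below (range char_fun_tail)" using char_fun_tail_nonneg by (auto intro!: bdd_belowI)
  fix y assume "y < Inf (range char_fun_tail)"
  then show "\<forall>\<^sub>F x in at_top. y < char_fun_tail x"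
    using cInf_lower[OF _ bdd] by (auto intro!: always_eventually) (meson order_less_le_trans rangeI)
next
  fix y assume "Inf (range char_fun_tail) < y"
  then obtain r0 where r0: "char_fun_tail r0 < y" using cInf_lessD[of "range char_fun_tail"] by auto
  show "\<forall>\<^sub>F x in at_top. char_fun_tail x < y"
    using eventually_ge_at_top[of r0]
    by eventually_elim (meson r0 order_le_less_trans char_fun_tail_antimono)
qed

lemma circle_sup_le_char_fun_tail:
  assumes "0 \<le> r"
  shows "0 \<le> Sup {cmod (char_fun \<mu> t) | t. cmod t = r}"
    and "Sup {cmod (char_fun \<mu> t) | t. cmod t = r} \<le> char_fun_tail r"
proof -
  have mem: "cmod (char_fun \<mu> (complex_of_real r)) \<in> {cmod (char_fun \<mu> t) | t. cmod t = r}"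
    using assms by auto
  have bdd: "bdd_above {cmod (char_fun \<mu> t) | t. cmod t = r}"
    using norm_char_fun_le_1 by (auto intro!: bdd_aboveI[where M=1])
  from cSup_upper[OF mem bdd] show "0 \<le> Sup {cmod (char_fun \<mu> t) | t. cmod t = r}"
    by (meson norm_ge_zero order_trans)
  show "Sup {cmod (char_fun \<mu> t) | t. cmod t = r} \<le> char_fun_tail r"
    unfolding char_fun_tail_def using mem
    by (intro cSup_subset_mono[OF _ bdd_above_char_fun_tail_set]) auto
qed

end

section \<open>The contraction inequality for characteristic functions\<close>

lemma le_power_imp_eq_0_or_1:
  fixes x :: real
  assumes "0 \<le> x" "x \<le> 1" "2 \<le> m" "x \<le> x ^ m"
  shows "x = 0 \<or> x = 1"
proof (rule ccontr)
  assume "\<not> (x = 0 \<or> x = 1)"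
  with assms have "0 < x" "x < 1" by auto
  have "x ^ m \<le> x ^ 2" by (rule power_decreasing) (use assms in auto)
  also have "\<dots> < x" using \<open>0 < x\<close> \<open>x < 1\<close> by (simp add: power2_eq_square)
  finally show False using assms(4) by simp
qed

lemma cinner_rotate: "cinner (exp (- cnj lam * complex_of_real s) * t) w = Re (cnj t * w * exp (- lam * complex_of_real s))"
  by (simp add: cinner_def exp_cnj algebra_simps)

definition spiral_defect :: "real measure \<Rightarrow> complex \<Rightarrow> complex \<Rightarrow> ennreal" where
  "spiral_defect P lam c = (\<integral>\<^sup>+ s. ennreal (1 - cos (Re (c * exp (- lam * complex_of_real s)))) \<partial>P)"

text \<open>Averaged over \<open>s \<sim> P\<close>, the spiral \<open>c exp (- \<lambda> s)\<close> keeps its real part away from \<open>2\<pi>\<int>\<close>, uniformly in large \<open>c\<close>.\<close>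
definition spiral_nondegenerate :: "real measure \<Rightarrow> complex \<Rightarrow> bool" where
  "spiral_nondegenerate P lam \<longleftrightarrow> (\<exists>\<kappa>>0. \<exists>R. \<forall>c. R \<le> cmod c \<longrightarrow> ennreal \<kappa> \<le> spiral_defect P lam c)"

locale char_fun_contraction = complex_law \<mu> + P: prob_space P
  for \<mu> :: "complex measure" and P :: "real measure" +
  fixes lam :: complex and m :: nat
  assumes sets_P: "sets P = sets borel"
    and m_ge_2: "2 \<le> m"
    and norm_char_fun_le:
      "\<And>t. cmod (char_fun \<mu> t) \<le> (LINT s|P. cmod (char_fun \<mu> (exp (- cnj lam * complex_of_real s) * t)) ^ m)"
begin

lemmas [measurable_cong] = sets_P

lemma integrable_bounded_P:
  fixes f :: "real \<Rightarrow> real"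
  shows "f \<in> borel_measurable borel \<Longrightarrow> (\<And>s. 0 \<le> f s \<and> f s \<le> 1) \<Longrightarrow> integrable P (\<lambda>s. f s ^ k)"
  by (rule P.integrable_const_bound[where B=1]) (auto simp: power_le_one measurable_cong_sets[OF sets_P refl])

lemma borel_measurable_spiral_defect [measurable]:
  assumes [measurable]: "f \<in> borel_measurable N"
  shows "(\<lambda>x. spiral_defect P lam (f x)) \<in> borel_measurable N"
  unfolding spiral_defect_def by measurable

lemma char_fun_tail_le_integral:
  "char_fun_tail r \<le> (LINT s|P. char_fun_tail (r * exp (- Re lam * s)) ^ m)"
  unfolding char_fun_tail_def[of r]
proof (rule cSup_least[OF char_fun_tail_set_nonempty], safe)
  fix t assume r_le: "r \<le> cmod t"
  have "cmod (char_fun \<mu> t) \<le> (LINT s|P. cmod (char_fun \<mu> (exp (- cnj lam * complex_of_real s) * t)) ^ m)"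
    by (rule norm_char_fun_le)
  also have "\<dots> \<le> (LINT s|P. char_fun_tail (r * exp (- Re lam * s)) ^ m)"
  proof (rule integral_mono)
    show "integrable P (\<lambda>s. cmod (char_fun \<mu> (exp (- cnj lam * complex_of_real s) * t)) ^ m)"
      by (rule integrable_bounded_P) (auto intro: norm_char_fun_le_1)
    show "integrable P (\<lambda>s. char_fun_tail (r * exp (- Re lam * s)) ^ m)"
      by (rule integrable_bounded_P) (auto intro: char_fun_tail_nonneg char_fun_tail_le_1)
    fix s
    have "r * exp (- Re lam * s) \<le> cmod (exp (- cnj lam * complex_of_real s) * t)"
      using r_le by (simp add: norm_mult mult.commute)
    then show "cmod (char_fun \<mu> (exp (- cnj lam * complex_of_real s) * t)) ^ m \<le> char_fun_tail (r * exp (- Re lam * s)) ^ m"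
      by (intro power_mono char_fun_le_tail) auto
  qed
  finally show "cmod (char_fun \<mu> t) \<le> (LINT s|P. char_fun_tail (r * exp (- Re lam * s)) ^ m)" .
qed

text \<open>Letting r \<rightarrow> \<infinity> in \<open>char_fun_tail_le_integral\<close> gives L \<le> L^m for the limit L of the tail.\<close>
lemma char_fun_tail_limit_cases: "Inf (range char_fun_tail) = 0 \<or> (\<forall>r. char_fun_tail r = 1)"
proof -
  define L where "L = Inf (range char_fun_tail)"
  have bdd: "bdd_below (range char_fun_tail)" using char_fun_tail_nonneg by (auto intro!: bdd_belowI)
  have L_le: "L \<le> char_fun_tail r" for r unfolding L_def by (rule cInf_lower[OF _ bdd]) auto
  have "0 \<le> L" unfolding L_def using char_fun_tail_nonneg by (auto intro!: cInf_greatest)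
  have "L \<le> 1" using L_le[of 0] char_fun_tail_le_1[of 0] by linarith
  have "(\<lambda>n. LINT s|P. char_fun_tail (real n * exp (- Re lam * s)) ^ m) \<longlonglongrightarrow> (LINT s|P. L ^ m)"
  proof (rule integral_dominated_convergence[where w="\<lambda>_. 1"])
    show "AE s in P. (\<lambda>n. char_fun_tail (real n * exp (- Re lam * s)) ^ m) \<longlonglongrightarrow> L ^ m"
    proof (intro AE_I2 tendsto_intros filterlim_compose[OF char_fun_tail_tendsto_Inf[folded L_def]])
      fix s
      show "filterlim (\<lambda>n. real n * exp (- Re lam * s)) at_top sequentially"
        by (rule filterlim_at_top_mult_tendsto_pos[OF tendsto_const _ filterlim_real_sequentially]) simp
    qed
  qed (auto simp: measurable_cong_sets[OF sets_P refl] char_fun_tail_nonneg char_fun_tail_le_1 power_le_one)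
  then have "L \<le> L ^ m"
    using L_le char_fun_tail_le_integral by (intro LIMSEQ_le_const) (auto simp: P.prob_space intro: order_trans)
  then have "L = 0 \<or> L = 1"
    using \<open>0 \<le> L\<close> \<open>L \<le> 1\<close> m_ge_2 by (intro le_power_imp_eq_0_or_1)
  then show ?thesis
    using L_le char_fun_tail_le_1 unfolding L_def by (auto intro: antisym)
qed

lemma nn_integral_rotated_defect_le:
  "(\<integral>\<^sup>+ s. ennreal (1 - cmod (char_fun \<mu> (exp (- cnj lam * complex_of_real s) * t)) ^ 2) \<partial>P)
     \<le> ennreal (1 - cmod (char_fun \<mu> t))"
proof -
  define \<phi> where "\<phi> s = cmod (char_fun \<mu> (exp (- cnj lam * complex_of_real s) * t))" for s
  have [measurable]: "\<phi> \<in> borel_measurable borel" unfolding \<phi>_def by measurable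
  have \<phi>_bounds: "0 \<le> \<phi> s \<and> \<phi> s \<le> 1" for s unfolding \<phi>_def by (simp add: norm_char_fun_le_1)
  note int_\<phi> = integrable_bounded_P[OF _ \<phi>_bounds]
  have "cmod (char_fun \<mu> t) \<le> (LINT s|P. \<phi> s ^ m)"
    unfolding \<phi>_def by (rule norm_char_fun_le)
  also have "\<dots> \<le> (LINT s|P. \<phi> s ^ 2)"
    using \<phi>_bounds m_ge_2 by (intro integral_mono int_\<phi> power_decreasing) auto
  finally have "(LINT s|P. 1 - \<phi> s ^ 2) \<le> 1 - cmod (char_fun \<mu> t)"
    using int_\<phi> by (simp add: P.prob_space)
  moreover have "(\<integral>\<^sup>+ s. ennreal (1 - \<phi> s ^ 2) \<partial>P) = ennreal (LINT s|P. 1 - \<phi> s ^ 2)"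
    using int_\<phi> \<phi>_bounds by (intro nn_integral_eq_integral) (auto simp: power_le_one)
  ultimately show ?thesis
    unfolding \<phi>_def[symmetric] by (simp add: ennreal_leI)
qed

lemma nn_integral_spiral_defect_le:
  "(\<integral>\<^sup>+ z. \<integral>\<^sup>+ z'. spiral_defect P lam (cnj t * (z - z')) \<partial>\<mu> \<partial>\<mu>) \<le> ennreal (1 - cmod (char_fun \<mu> t))"
proof -
  interpret \<mu>P: pair_sigma_finite \<mu> P
    by (intro pair_sigma_finite.intro prob_space_imp_sigma_finite P.prob_space_axioms prob_space_axioms)
  define F where "F s z z' = ennreal (1 - cos (cinner (exp (- cnj lam * complex_of_real s) * t) (z - z')))"
    for s z z'
  have meas_F: "(\<lambda>p. F (snd (fst p)) (fst (fst p)) (snd p)) \<in> borel_measurable ((\<mu> \<Otimes>\<^sub>M P) \<Otimes>\<^sub>M \<mu>)"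
    "(\<lambda>p. F (snd p) z (fst p)) \<in> borel_measurable (\<mu> \<Otimes>\<^sub>M P)" for z
    unfolding F_def by measurable
  have "(\<integral>\<^sup>+ z. \<integral>\<^sup>+ z'. \<integral>\<^sup>+ s. F s z z' \<partial>P \<partial>\<mu> \<partial>\<mu>) = (\<integral>\<^sup>+ z. \<integral>\<^sup>+ s. \<integral>\<^sup>+ z'. F s z z' \<partial>\<mu> \<partial>P \<partial>\<mu>)"
    using meas_F(2) by (intro nn_integral_cong \<mu>P.Fubini'[symmetric]) (simp add: case_prod_beta)
  also have "\<dots> = (\<integral>\<^sup>+ s. \<integral>\<^sup>+ z. \<integral>\<^sup>+ z'. F s z z' \<partial>\<mu> \<partial>\<mu> \<partial>P)"
    using borel_measurable_nn_integral[of "\<lambda>x z'. F (snd x) (fst x) z'" "\<mu> \<Otimes>\<^sub>M P"] meas_F(1)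
    by (intro \<mu>P.Fubini'[symmetric]) (simp add: case_prod_beta)
  also have "\<dots> = (\<integral>\<^sup>+ s. ennreal (1 - cmod (char_fun \<mu> (exp (- cnj lam * complex_of_real s) * t)) ^ 2) \<partial>P)"
    unfolding F_def by (simp add: nn_integral_char_fun_defect)
  also have "\<dots> \<le> ennreal (1 - cmod (char_fun \<mu> t))"
    by (rule nn_integral_rotated_defect_le)
  finally show ?thesis
    unfolding F_def cinner_rotate spiral_defect_def .
qed

lemma exists_char_fun_seq_tendsto_1:
  assumes "\<And>r. char_fun_tail r = 1"
  obtains t where "\<And>n. real n \<le> cmod (t n)" and "\<And>n. 1 - 1 / real (Suc n) < cmod (char_fun \<mu> (t n))"
proof -
  have "\<exists>t. real n \<le> cmod t \<and> 1 - 1 / real (Suc n) < cmod (char_fun \<mu> t)" for n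
  proof -
    have "1 - 1 / real (Suc n) < Sup {cmod (char_fun \<mu> t) | t. real n \<le> cmod t}"
      using assms[of "real n"] unfolding char_fun_tail_def by simp
    then show ?thesis by (rule less_cSupE[OF _ char_fun_tail_set_nonempty]) blast
  qed
  then show ?thesis using that by metis
qed

lemma AE_AE_liminf_spiral_defect_eq_0:
  assumes t_near_1: "\<And>n. 1 - 1 / real (Suc n) < cmod (char_fun \<mu> (t n))"
  shows "AE z in \<mu>. AE z' in \<mu>. liminf (\<lambda>n. spiral_defect P lam (cnj (t n) * (z - z'))) = 0"
proof -
  define g where "g n z z' = spiral_defect P lam (cnj (t n) * (z - z'))" for n z z'
  have meas_g: "(\<lambda>z. \<integral>\<^sup>+ z'. g n z z' \<partial>\<mu>) \<in> borel_measurable \<mu>" "g n z \<in> borel_measurable \<mu>" for n z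
    unfolding g_def by measurable
  have "(\<integral>\<^sup>+ z. \<integral>\<^sup>+ z'. g n z z' \<partial>\<mu> \<partial>\<mu>) \<le> ennreal (1 / real (Suc n))" for n
  proof -
    have "(\<integral>\<^sup>+ z. \<integral>\<^sup>+ z'. g n z z' \<partial>\<mu> \<partial>\<mu>) \<le> ennreal (1 - cmod (char_fun \<mu> (t n)))"
      unfolding g_def by (rule nn_integral_spiral_defect_le)
    also have "\<dots> \<le> ennreal (1 / real (Suc n))"
      using t_near_1[of n] by (intro ennreal_leI) simp
    finally show ?thesis .
  qed
  then have "liminf (\<lambda>n. \<integral>\<^sup>+ z. \<integral>\<^sup>+ z'. g n z z' \<partial>\<mu> \<partial>\<mu>) \<le> liminf (\<lambda>n. ennreal (1 / real (Suc n)))"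
    by (intro Liminf_mono always_eventually allI)
  also have "\<dots> = 0"
  proof (rule lim_imp_Liminf[OF trivial_limit_sequentially])
    have "(\<lambda>n. 1 / real (Suc n)) \<longlonglongrightarrow> 0"
      using LIMSEQ_inverse_real_of_nat by (simp add: inverse_eq_divide)
    then show "(\<lambda>n. ennreal (1 / real (Suc n))) \<longlonglongrightarrow> 0"
      using tendsto_ennrealI by fastforce
  qed
  finally have "AE z in \<mu>. liminf (\<lambda>n. \<integral>\<^sup>+ z'. g n z z' \<partial>\<mu>) = 0"
    by (intro AE_liminf_eq_0 meas_g) simp
  then show ?thesis
    unfolding g_def[symmetric] by eventually_elim (intro AE_liminf_eq_0 meas_g)
qed

text \<open>Along t_n, the vectors \<open>cnj (t n) * (z - z')\<close> grow unless z = z', while their spiral defects tend to 0.\<close>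
lemma AE_AE_eq_if_char_fun_tail_eq_1:
  assumes spiral: "spiral_nondegenerate P lam" and tail_eq_1: "\<And>r. char_fun_tail r = 1"
  shows "AE z in \<mu>. AE z' in \<mu>. z' = z"
proof -
  obtain \<kappa> R where "\<kappa> > 0" and spiral_bound: "\<And>c. R \<le> cmod c \<Longrightarrow> ennreal \<kappa> \<le> spiral_defect P lam c"
    using spiral unfolding spiral_nondegenerate_def by blast
  obtain t where t_large: "\<And>n. real n \<le> cmod (t n)"
    and t_near_1: "\<And>n. 1 - 1 / real (Suc n) < cmod (char_fun \<mu> (t n))"
    using exists_char_fun_seq_tendsto_1[OF tail_eq_1] by blast
  have "z' = z" if liminf_0: "liminf (\<lambda>n. spiral_defect P lam (cnj (t n) * (z - z'))) = 0" for z z'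
  proof (rule ccontr)
    assume "z' \<noteq> z"
    have "filterlim (\<lambda>n. cmod (t n)) at_top sequentially"
      using t_large by (intro filterlim_at_top_mono[OF filterlim_real_sequentially]) auto
    then have "filterlim (\<lambda>n. cmod (t n) * cmod (z - z')) at_top sequentially"
      using \<open>z' \<noteq> z\<close> by (intro filterlim_at_top_mult_tendsto_pos[OF tendsto_const]) auto
    then have "\<forall>\<^sub>F n in sequentially. R \<le> cmod (t n) * cmod (z - z')"
      by (simp add: filterlim_at_top)
    then have "\<forall>\<^sub>F n in sequentially. ennreal \<kappa> \<le> spiral_defect P lam (cnj (t n) * (z - z'))"
      by eventually_elim (intro spiral_bound, simp add: norm_mult)
    then have "ennreal \<kappa> \<le> liminf (\<lambda>n. spiral_defect P lam (cnj (t n) * (z - z')))"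
      by (rule Liminf_bounded)
    then show False using liminf_0 \<open>\<kappa> > 0\<close> by simp
  qed
  with AE_AE_liminf_spiral_defect_eq_0[OF t_near_1] show ?thesis
    by (auto elim!: eventually_mono)
qed

theorem circle_sup_char_fun_tendsto_0:
  assumes "spiral_nondegenerate P lam" and not_dirac: "\<not> (\<exists>c. AE z in \<mu>. z = c)"
  shows "((\<lambda>r. Sup {cmod (char_fun \<mu> t) | t. cmod t = r}) \<longlongrightarrow> 0) at_top"
proof (rule tendsto_sandwich[OF _ _ tendsto_const])
  have "Inf (range char_fun_tail) = 0"
    using char_fun_tail_limit_cases AE_AE_eq_if_char_fun_tail_eq_1[OF assms(1)]
      AE_const_of_AE_AE_eq not_dirac by blast
  then show "(char_fun_tail \<longlongrightarrow> 0) at_top"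
    using char_fun_tail_tendsto_Inf by simp
  show "\<forall>\<^sub>F r in at_top. 0 \<le> Sup {cmod (char_fun \<mu> t) | t. cmod t = r}"
    using eventually_ge_at_top[of 0] by eventually_elim (rule circle_sup_le_char_fun_tail)
  show "\<forall>\<^sub>F r in at_top. Sup {cmod (char_fun \<mu> t) | t. cmod t = r} \<le> char_fun_tail r"
    using eventually_ge_at_top[of 0] by eventually_elim (rule circle_sup_le_char_fun_tail)
qed

end

section \<open>Spiral nondegeneracy\<close>

lemma cos_ge_half_if_abs_le: "\<bar>y\<bar> \<le> pi / 3 \<Longrightarrow> 1 / 2 \<le> cos y"
proof -
  assume y: "\<bar>y\<bar> \<le> pi / 3"
  have "cos (pi / 3) \<le> cos \<bar>y\<bar>" by (rule cos_monotone_0_pi_le) (use y in auto)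
  moreover have "cos \<bar>y\<bar> = cos y" by (cases "y \<ge> 0") auto
  ultimately show ?thesis by (simp add: cos_60)
qed

lemma exists_window_cos_ge_half:
  fixes b :: real
  assumes "b \<noteq> 0"
  shows "\<exists>lo. A \<le> lo \<and> lo \<le> A + 2 * pi / \<bar>b\<bar> \<and>
           (\<forall>s. lo \<le> s \<and> s \<le> lo + 2 * (pi / (3 * \<bar>b\<bar>)) \<longrightarrow> 1 / 2 \<le> cos (b * s - \<alpha>))"
proof -
  define h where "h = pi / (3 * \<bar>b\<bar>)"
  define p where "p = 2 * pi / \<bar>b\<bar>"
  define k where "k = \<lceil>(A + h - \<alpha> / b) / p\<rceil>"
  define s0 where "s0 = \<alpha> / b + p * of_int k"
  have "p > 0" using assms by (simp add: p_def)
  have "(A + h - \<alpha> / b) / p \<le> of_int k" "of_int k < (A + h - \<alpha> / b) / p + 1"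
    unfolding k_def by linarith+
  then have "A + h \<le> s0" "s0 \<le> A + h + p"
    using \<open>p > 0\<close> by (simp_all add: s0_def field_simps)
  have "b * s0 - \<alpha> = b * p * of_int k"
    using assms by (simp add: s0_def field_simps)
  also have "b * p = (if b > 0 then 2 * pi else - 2 * pi)"
    using assms by (simp add: p_def)
  finally have phase: "b * s0 - \<alpha> = of_int (if b > 0 then k else - k) * (2 * pi)"
    by simp
  show ?thesis
  proof (intro exI[of _ "s0 - h"] conjI allI impI)
    show "A \<le> s0 - h" "s0 - h \<le> A + 2 * pi / \<bar>b\<bar>"
      using \<open>A + h \<le> s0\<close> \<open>s0 \<le> A + h + p\<close> by (simp_all add: p_def)
    fix s assume "s0 - h \<le> s \<and> s \<le> s0 - h + 2 * (pi / (3 * \<bar>b\<bar>))"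
    then have "\<bar>s - s0\<bar> \<le> h" by (auto simp: h_def)
    then have "\<bar>b * (s - s0)\<bar> \<le> \<bar>b\<bar> * h" by (simp add: abs_mult mult_left_mono)
    also have "\<bar>b\<bar> * h = pi / 3" using assms by (simp add: h_def)
    finally have "\<bar>b * (s - s0)\<bar> \<le> pi / 3" .
    have "cos (b * s - \<alpha>) = cos (b * (s - s0) + of_int (if b > 0 then k else - k) * (2 * pi))"
      using phase by (simp add: algebra_simps)
    also have "\<dots> = cos (b * (s - s0))"
      using cos.plus_of_int[of "b * (s - s0)"] by simp
    finally show "1 / 2 \<le> cos (b * s - \<alpha>)"
      using cos_ge_half_if_abs_le[OF \<open>\<bar>b * (s - s0)\<bar> \<le> pi / 3\<close>] by simp
  qed
qed

text \<open>\<open>sin g - g\<close> is a primitive of \<open>q (1 - cos g)\<close>, so a steep descent of \<open>g\<close> forces a large integral.\<close>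
lemma has_integral_mult_one_minus_cos_ge:
  fixes g q :: "real \<Rightarrow> real"
  assumes deriv: "\<And>s. (g has_real_derivative - q s) (at s)"
    and "lo \<le> hi" and q_ge: "\<And>s. lo \<le> s \<Longrightarrow> s \<le> hi \<Longrightarrow> qmin \<le> q s"
  obtains I where "((\<lambda>s. q s * (1 - cos (g s))) has_integral I) {lo..hi}" and "(hi - lo) * qmin - 2 \<le> I"
proof -
  define G where "G s = sin (g s) - g s" for s
  have "((\<lambda>s. q s * (1 - cos (g s))) has_integral G hi - G lo) {lo..hi}"
  proof (rule fundamental_theorem_of_calculus[OF \<open>lo \<le> hi\<close>])
    fix s
    have "(G has_real_derivative q s * (1 - cos (g s))) (at s)"
      unfolding G_def by (rule derivative_eq_intros deriv refl | simp)+ (simp add: algebra_simps)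
    then show "(G has_vector_derivative q s * (1 - cos (g s))) (at s within {lo..hi})"
      by (simp add: has_real_derivative_iff_has_vector_derivative has_vector_derivative_at_within)
  qed
  moreover have "(hi - lo) * qmin - 2 \<le> G hi - G lo"
  proof -
    obtain \<xi> where "lo \<le> \<xi>" "\<xi> \<le> hi" "g hi - g lo = (hi - lo) * - q \<xi>"
    proof (cases "lo = hi")
      case False
      then obtain \<xi> where "lo < \<xi>" "\<xi> < hi" "g hi - g lo = (hi - lo) * - q \<xi>"
        using MVT2[of lo hi g "\<lambda>s. - q s"] deriv \<open>lo \<le> hi\<close> by auto
      then show ?thesis using that[of \<xi>] by simp
    qed (use that in auto)
    then have "(hi - lo) * qmin \<le> g lo - g hi"
      using q_ge[of \<xi>] \<open>lo \<le> hi\<close> mult_left_mono[of qmin "q \<xi>" "hi - lo"] by simp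
    then show ?thesis
      unfolding G_def using sin_ge_minus_one[of "g hi"] sin_le_one[of "g lo"] by linarith
  qed
  ultimately show ?thesis by (rule that)
qed

lemma nn_integral_exponential_one_minus_cos_ge:
  fixes g q :: "real \<Rightarrow> real"
  assumes deriv: "\<And>s. (g has_real_derivative - q s) (at s)"
    and "0 \<le> lo" "lo \<le> hi" "0 < R" "0 \<le> qmin"
    and q_bounds: "\<And>s. lo \<le> s \<Longrightarrow> s \<le> hi \<Longrightarrow> qmin \<le> q s \<and> q s \<le> R"
  shows "ennreal (exp (- hi) / R * ((hi - lo) * qmin - 2))
           \<le> (\<integral>\<^sup>+ s. ennreal (exponential_density 1 s * (1 - cos (g s))) \<partial>lborel)"
proof -
  define K where "K = exp (- hi) / R"
  have "K > 0" using \<open>0 < R\<close> by (simp add: K_def)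
  have q_nonneg: "0 \<le> q s" if "lo \<le> s" "s \<le> hi" for s
    using q_bounds[OF that] \<open>0 \<le> qmin\<close> by linarith
  obtain I where I: "((\<lambda>s. q s * (1 - cos (g s))) has_integral I) {lo..hi}" and "(hi - lo) * qmin - 2 \<le> I"
    using has_integral_mult_one_minus_cos_ge[OF deriv \<open>lo \<le> hi\<close>, of qmin] q_bounds by blast
  then have "ennreal (K * ((hi - lo) * qmin - 2)) \<le> ennreal (K * I)"
    using \<open>K > 0\<close> by (intro ennreal_leI) simp
  also have "\<dots> = (\<integral>\<^sup>+ s. ennreal (indicator {lo..hi} s * (K * (q s * (1 - cos (g s))))) \<partial>lborel)"
    using q_nonneg \<open>K > 0\<close> I
    by (intro nn_integral_has_integral_lebesgue[symmetric] has_integral_mult_right) (auto intro!: mult_nonneg_nonneg)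
  also have "\<dots> \<le> (\<integral>\<^sup>+ s. ennreal (exponential_density 1 s * (1 - cos (g s))) \<partial>lborel)"
  proof (intro nn_integral_mono ennreal_leI)
    fix s
    show "indicator {lo..hi} s * (K * (q s * (1 - cos (g s)))) \<le> exponential_density 1 s * (1 - cos (g s))"
    proof (cases "lo \<le> s \<and> s \<le> hi")
      case True
      then have "K * q s \<le> exp (- s)"
        using q_bounds[of s] \<open>0 < R\<close>
          mult_mono[of "q s" R "exp (- hi)" "exp (- s)"] q_nonneg[of s]
        by (simp add: K_def field_simps)
      then show ?thesis
        using True \<open>0 \<le> lo\<close> by (simp add: exponential_density_def mult.assoc[symmetric] mult_right_mono)
    qed (simp add: exponential_density_def)
  qed
  finally show ?thesis by (simp add: K_def)
qed

lemma Re_spiral_window: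
  fixes w lam :: complex
  assumes "0 < Re lam" and "Im lam \<noteq> 0"
  defines "h \<equiv> pi / (3 * \<bar>Im lam\<bar>)" and "S \<equiv> 1 + 2 * pi / \<bar>Im lam\<bar> + 2 * (pi / (3 * \<bar>Im lam\<bar>))"
  obtains lo where "1 \<le> lo" and "lo + 2 * h \<le> S"
    and "\<And>s. lo \<le> s \<Longrightarrow> s \<le> lo + 2 * h \<Longrightarrow>
           cmod w * exp (- Re lam * S) / 2 \<le> Re (w * exp (- lam * complex_of_real s))
           \<and> Re (w * exp (- lam * complex_of_real s)) \<le> cmod w"
proof -
  define R where "R = cmod w"
  have polar: "Re (w * exp (- lam * complex_of_real s)) = R * exp (- Re lam * s) * cos (Im lam * s - Arg w)" for s
  proof -
    have "w = rcis R (Arg w)" unfolding R_def by (rule rcis_cmod_Arg[symmetric])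
    then have "Re w = R * cos (Arg w)" "Im w = R * sin (Arg w)"
      by (metis Re_rcis, metis Im_rcis)
    then show ?thesis
      by (simp add: Re_exp Im_exp cos_diff algebra_simps)
  qed
  obtain lo where "1 \<le> lo" "lo \<le> 1 + 2 * pi / \<bar>Im lam\<bar>"
    and cos_ge: "\<And>s. lo \<le> s \<Longrightarrow> s \<le> lo + 2 * h \<Longrightarrow> 1 / 2 \<le> cos (Im lam * s - Arg w)"
    using exists_window_cos_ge_half[OF assms(2), of 1 "Arg w"] unfolding h_def by blast
  show ?thesis
  proof (rule that[OF \<open>1 \<le> lo\<close>])
    show "lo + 2 * h \<le> S" using \<open>lo \<le> 1 + 2 * pi / \<bar>Im lam\<bar>\<close> unfolding S_def h_def by linarith
    fix s assume s: "lo \<le> s" "s \<le> lo + 2 * h"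
    have "exp (- Re lam * S) \<le> exp (- Re lam * s)" "exp (- Re lam * s) \<le> 1"
      using s \<open>1 \<le> lo\<close> \<open>lo + 2 * h \<le> S\<close> \<open>0 < Re lam\<close> by auto
    then have "exp (- Re lam * S) * (1 / 2) \<le> exp (- Re lam * s) * cos (Im lam * s - Arg w)"
      and "exp (- Re lam * s) * cos (Im lam * s - Arg w) \<le> 1"
      using cos_ge[OF s] by (intro mult_mono mult_le_one; simp)+
    then have "R * (exp (- Re lam * S) * (1 / 2)) \<le> R * (exp (- Re lam * s) * cos (Im lam * s - Arg w))"
      and "R * (exp (- Re lam * s) * cos (Im lam * s - Arg w)) \<le> R * 1"
      by (intro mult_left_mono; simp add: R_def)+
    then show "cmod w * exp (- Re lam * S) / 2 \<le> Re (w * exp (- lam * complex_of_real s))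
        \<and> Re (w * exp (- lam * complex_of_real s)) \<le> cmod w"
      unfolding polar R_def[symmetric] by (simp add: mult.assoc)
  qed
qed

lemma nn_integral_exponential_spiral_ge:
  fixes lam c :: complex
  assumes "0 < Re lam" and "Im lam \<noteq> 0"
  defines "h \<equiv> pi / (3 * \<bar>Im lam\<bar>)" and "S \<equiv> 1 + 2 * pi / \<bar>Im lam\<bar> + 2 * (pi / (3 * \<bar>Im lam\<bar>))"
  assumes c_large: "4 * exp (Re lam * S) / (h * cmod lam) \<le> cmod c"
  shows "ennreal (exp (- S) * (h * exp (- Re lam * S)) / 2)
           \<le> (\<integral>\<^sup>+ s. ennreal (exponential_density 1 s * (1 - cos (Re (c * exp (- lam * complex_of_real s))))) \<partial>lborel)"
proof -
  define R where "R = cmod (lam * c)"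
  have "0 < h" "0 < cmod lam" using assms(1,2) by (auto simp: h_def)
  have "4 * exp (Re lam * S) / h = cmod lam * (4 * exp (Re lam * S) / (h * cmod lam))"
    using \<open>0 < cmod lam\<close> by simp
  also have "\<dots> \<le> R"
    using mult_left_mono[OF c_large, of "cmod lam"] by (simp add: R_def norm_mult)
  finally have R_large: "4 * exp (Re lam * S) / h \<le> R" .
  then have "0 < R" using \<open>0 < h\<close> by (smt (verit) divide_pos_pos exp_gt_zero)
  have deriv: "((\<lambda>s. Re (c * exp (- lam * complex_of_real s))) has_real_derivative
      - Re (lam * c * exp (- lam * complex_of_real s))) (at s)" for s
  proof -
    have "((\<lambda>z. c * exp (- lam * z)) has_field_derivative - lam * c * exp (- lam * complex_of_real s))
        (at (complex_of_real s))"
      by (rule derivative_eq_intros refl | simp)+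
    from has_field_derivative_Re[OF has_vector_derivative_real_field[OF this]] show ?thesis by simp
  qed
  obtain lo where "1 \<le> lo" "lo + 2 * h \<le> S"
    and window: "\<And>s. lo \<le> s \<Longrightarrow> s \<le> lo + 2 * h \<Longrightarrow>
      R * exp (- Re lam * S) / 2 \<le> Re (lam * c * exp (- lam * complex_of_real s))
      \<and> Re (lam * c * exp (- lam * complex_of_real s)) \<le> R"
    using Re_spiral_window[OF assms(1,2), of "lam * c"] unfolding R_def h_def S_def by blast
  have "2 / R \<le> h * exp (- Re lam * S) / 2"
    using R_large \<open>0 < h\<close> \<open>0 < R\<close> by (simp add: exp_minus field_simps)
  moreover have "exp (- S) \<le> exp (- (lo + 2 * h))"
    using \<open>lo + 2 * h \<le> S\<close> by simp
  ultimately have "exp (- S) * (h * exp (- Re lam * S) / 2) \<le> exp (- (lo + 2 * h)) * (h * exp (- Re lam * S) - 2 / R)"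
    using \<open>0 < h\<close> by (intro mult_mono) auto
  also have "\<dots> = exp (- (lo + 2 * h)) / R * ((lo + 2 * h - lo) * (R * exp (- Re lam * S) / 2) - 2)"
    using \<open>0 < R\<close> by (simp add: field_simps)
  finally have "ennreal (exp (- S) * (h * exp (- Re lam * S)) / 2)
      \<le> ennreal (exp (- (lo + 2 * h)) / R * ((lo + 2 * h - lo) * (R * exp (- Re lam * S) / 2) - 2))"
    by (intro ennreal_leI) simp
  also have "\<dots> \<le> (\<integral>\<^sup>+ s. ennreal (exponential_density 1 s * (1 - cos (Re (c * exp (- lam * complex_of_real s))))) \<partial>lborel)"
    using \<open>1 \<le> lo\<close> \<open>0 < h\<close> \<open>0 < R\<close> window
    by (intro nn_integral_exponential_one_minus_cos_ge[OF deriv]) auto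
  finally show ?thesis .
qed

lemma spiral_nondegenerate_exponential:
  assumes "Re lam > 0" and "Im lam \<noteq> 0"
  shows "spiral_nondegenerate (density lborel (exponential_density 1)) lam"
proof -
  define h where "h = pi / (3 * \<bar>Im lam\<bar>)"
  define S where "S = 1 + 2 * pi / \<bar>Im lam\<bar> + 2 * h"
  have "0 < h" using assms by (simp add: h_def)
  then show ?thesis
    using nn_integral_exponential_spiral_ge[OF assms, folded h_def, folded S_def]
    unfolding spiral_nondegenerate_def spiral_defect_def
    by (intro exI[of _ "exp (- S) * (h * exp (- Re lam * S)) / 2"] conjI exI allI impI)
       (auto simp: nn_integral_density ennreal_mult[symmetric] exponential_density_nonneg)
qed

lemma not_AE_eq_const_if_spiral_nondegenerate:
  assumes "spiral_nondegenerate P lam"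
  shows "\<not> (AE s in P. s = K)"
proof
  assume AE_K: "AE s in P. s = K"
  obtain \<kappa> R where "\<kappa> > 0" and spiral_bound: "\<And>c. R \<le> cmod c \<Longrightarrow>
      ennreal \<kappa> \<le> (\<integral>\<^sup>+ s. ennreal (1 - cos (Re (c * exp (- lam * complex_of_real s)))) \<partial>P)"
    using assms unfolding spiral_nondegenerate_def spiral_defect_def by blast
  obtain n :: nat where n: "R / (2 * pi * exp (Re lam * K)) \<le> real n"
    using real_arch_simple by blast
  define c where "c = complex_of_real (2 * pi * real n) * exp (lam * complex_of_real K)"
  have "R \<le> cmod c"
    using n by (simp add: c_def norm_mult field_simps)
  then have "ennreal \<kappa> \<le> (\<integral>\<^sup>+ s. ennreal (1 - cos (Re (c * exp (- lam * complex_of_real s)))) \<partial>P)"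
    by (rule spiral_bound)
  also have "\<dots> = (\<integral>\<^sup>+ s. 0 \<partial>P)"
  proof (rule nn_integral_cong_AE)
    show "AE s in P. ennreal (1 - cos (Re (c * exp (- lam * complex_of_real s)))) = 0"
      using AE_K
    proof eventually_elim
      fix s assume "s = K"
      then have "c * exp (- lam * complex_of_real s) = complex_of_real (2 * pi * real n)"
        by (simp add: c_def mult.assoc exp_add[symmetric])
      then show "ennreal (1 - cos (Re (c * exp (- lam * complex_of_real s)))) = 0"
        using cos_int_2pin[of "int n"] by (simp add: mult.commute)
    qed
  qed
  finally show False using \<open>\<kappa> > 0\<close> by simp
qed

lemma exists_abs_le_prob_gt_half:
  fixes Q :: "real measure"
  assumes "prob_space Q" and [measurable_cong]: "sets Q = sets borel"
  obtains K :: nat where "ennreal (1 / 2) < emeasure Q {y \<in> space Q. \<bar>y\<bar> \<le> real K}"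
proof -
  interpret Q: prob_space Q by fact
  define A where "A n = {y \<in> space Q. \<bar>y\<bar> \<le> real n}" for n :: nat
  have "(\<lambda>n. emeasure Q (A n)) \<longlonglongrightarrow> emeasure Q (\<Union>n. A n)"
    by (rule Lim_emeasure_incseq) (auto simp: incseq_def A_def)
  moreover have "(\<Union>n. A n) = space Q"
    by (auto simp: A_def) (meson real_arch_simple)
  moreover have "ennreal (1 / 2) < 1"
    by (subst ennreal_1[symmetric], subst ennreal_less_iff) auto
  ultimately have "\<forall>\<^sub>F n in sequentially. ennreal (1 / 2) < emeasure Q (A n)"
    by (intro order_tendstoD) (auto simp: Q.emeasure_space_1)
  then show ?thesis
    using that by (auto simp: eventually_sequentially A_def)
qed

lemma spiral_defect_shift:
  "(\<integral>\<^sup>+ x. ennreal (1 - cos (Re (c * exp (- lam * complex_of_real (y + x))))) \<partial>P)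
     = spiral_defect P lam (c * exp (- lam * complex_of_real y))"
proof -
  have "c * exp (- lam * complex_of_real (y + x))
      = c * exp (- lam * complex_of_real y) * exp (- lam * complex_of_real x)" for x
    by (simp add: exp_add[symmetric] algebra_simps)
  then show ?thesis unfolding spiral_defect_def by (simp only:)
qed

lemma spiral_nondegenerate_convolution:
  assumes "spiral_nondegenerate P lam" and "prob_space P" "prob_space Q"
    and [measurable_cong]: "sets P = sets borel" "sets Q = sets borel"
  shows "spiral_nondegenerate (P \<star> Q) lam"
proof -
  obtain \<kappa> R where "\<kappa> > 0" and spiral_bound: "\<And>c. R \<le> cmod c \<Longrightarrow> ennreal \<kappa> \<le> spiral_defect P lam c"
    using assms(1) unfolding spiral_nondegenerate_def by blast
  obtain K :: nat where K: "ennreal (1 / 2) < emeasure Q {y \<in> space Q. \<bar>y\<bar> \<le> real K}"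
    using exists_abs_le_prob_gt_half[OF assms(3,5)] by blast
  define A where "A = {y \<in> space Q. \<bar>y\<bar> \<le> real K}"
  have "A \<in> sets Q" unfolding A_def by measurable
  have "ennreal (\<kappa> / 2) \<le> spiral_defect (P \<star> Q) lam c"
    if c_large: "R * exp (\<bar>Re lam\<bar> * real K) \<le> cmod c" for c
  proof -
    have "ennreal (\<kappa> / 2) = ennreal \<kappa> * ennreal (1 / 2)"
      using \<open>\<kappa> > 0\<close> by (subst ennreal_mult[symmetric]) auto
    also have "\<dots> \<le> ennreal \<kappa> * emeasure Q A"
      using K by (intro mult_left_mono) (auto simp: A_def)
    also have "\<dots> = (\<integral>\<^sup>+ y. ennreal \<kappa> * indicator A y \<partial>Q)"
      by (rule nn_integral_cmult_indicator[OF \<open>A \<in> sets Q\<close>, symmetric])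
    also have "\<dots> \<le> (\<integral>\<^sup>+ y. spiral_defect P lam (c * exp (- lam * complex_of_real y)) \<partial>Q)"
    proof (intro nn_integral_mono)
      fix y
      show "ennreal \<kappa> * indicator A y \<le> spiral_defect P lam (c * exp (- lam * complex_of_real y))"
      proof (cases "y \<in> A")
        case True
        then have "Re lam * y \<le> \<bar>Re lam\<bar> * real K"
          using abs_ge_self[of "Re lam * y"] mult_left_mono[of "\<bar>y\<bar>" "real K" "\<bar>Re lam\<bar>"]
          by (auto simp: A_def abs_mult)
        have "R = R * exp (\<bar>Re lam\<bar> * real K) * exp (- \<bar>Re lam\<bar> * real K)"
          by (simp add: exp_minus)
        also have "\<dots> \<le> cmod c * exp (- Re lam * y)"
          using c_large \<open>Re lam * y \<le> \<bar>Re lam\<bar> * real K\<close> by (intro mult_mono) auto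
        finally have "R \<le> cmod (c * exp (- lam * complex_of_real y))"
          by (simp add: norm_mult)
        then show ?thesis using True spiral_bound by simp
      qed simp
    qed
    also have "\<dots> = spiral_defect (Q \<star> P) lam c"
      using assms(2-5) unfolding spiral_defect_shift[symmetric]
      by (unfold spiral_defect_def, intro nn_integral_convolution[symmetric]) (auto intro: prob_space.finite_measure)
    finally show ?thesis
      using convolution_commutative[of Q P] assms(2-5) by (simp add: prob_space.finite_measure)
  qed
  then show ?thesis
    unfolding spiral_nondegenerate_def using \<open>\<kappa> > 0\<close>
    by (intro exI[of _ "\<kappa> / 2"] conjI exI[of _ "R * exp (\<bar>Re lam\<bar> * real K)"] allI impI) auto
qed

section \<open>The fixed-point equation\<close>

lemma integral_exponential_density:
  assumes "(0::real) < l"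
  shows "integrable lborel (exponential_density l)" and "(\<integral>x. exponential_density l x \<partial>lborel) = 1"
proof -
  interpret prob_space "density lborel (exponential_density l)"
    by (rule prob_space_exponential_density[OF assms])
  have nonneg: "AE x in lborel. 0 \<le> exponential_density l x"
    using exponential_density_nonneg[OF assms] by simp
  have "integrable (density lborel (exponential_density l)) (\<lambda>_. 1::real)" by simp
  then show "integrable lborel (exponential_density l)"
    by (subst (asm) integrable_density) (use nonneg in auto)
  have "(\<integral>x. 1 \<partial>density lborel (exponential_density l)) = (\<integral>x. exponential_density l x *\<^sub>R (1::real) \<partial>lborel)"
    by (rule integral_density) (use nonneg in auto)
  then show "(\<integral>x. exponential_density l x \<partial>lborel) = 1" using prob_space by simp
qed

lemma laplace_exponential_density:
  assumes "(0::real) < j" and "0 < a"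
  shows "integrable lborel (\<lambda>x. exponential_density j x * exp (- a * x))"
    and "(\<integral>x. exponential_density j x * exp (- a * x) \<partial>lborel) = j / (j + a)"
proof -
  have eq: "exponential_density j x * exp (- a * x) = j / (j + a) * exponential_density (j + a) x" for x
    using assms by (simp add: exponential_density_def field_simps exp_add[symmetric] algebra_simps)
  show "integrable lborel (\<lambda>x. exponential_density j x * exp (- a * x))"
    unfolding eq using integral_exponential_density(1)[of "j + a"] assms by simp
  show "(\<integral>x. exponential_density j x * exp (- a * x) \<partial>lborel) = j / (j + a)"
    unfolding eq using integral_exponential_density(2)[of "j + a"] assms by simp
qed

lemma Suc_mult_prod_ratio_eq_1: "real (Suc n) * (\<Prod>j=1..n. real j / (real j + 1)) = 1"
proof (induction n)
  case (Suc n)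
  have "real (Suc (Suc n)) * (\<Prod>j=1..Suc n. real j / (real j + 1))
        = real (Suc n) * (\<Prod>j=1..n. real j / (real j + 1))"
    by (simp add: prod.nat_ivl_Suc' field_simps)
  then show ?case using Suc by (simp add: mult.commute)
qed simp

lemma Suc_mult_prod_ratio_ne_1:
  assumes "(0::real) < a" "a \<noteq> 1" "1 \<le> n"
  shows "real (Suc n) * (\<Prod>j=1..n. real j / (real j + a)) \<noteq> 1"
proof
  assume "real (Suc n) * (\<Prod>j=1..n. real j / (real j + a)) = 1"
  then have "real (Suc n) * (\<Prod>j=1..n. real j / (real j + a)) = real (Suc n) * (\<Prod>j=1..n. real j / (real j + 1))"
    using Suc_mult_prod_ratio_eq_1[of n] by (simp only:)
  then have "(\<Prod>j=1..n. real j / (real j + a)) = (\<Prod>j=1..n. real j / (real j + 1))"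
    by (subst (asm) mult_cancel_left) simp
  moreover have "1 \<in> {1..n}" using assms by simp
  ultimately show False
  proof (cases "a < 1")
    case True
    have "(\<Prod>j=1..n. real j / (real j + 1)) < (\<Prod>j=1..n. real j / (real j + a))"
      by (rule prod_mono_strict[OF \<open>1 \<in> {1..n}\<close>])
         (use True assms in \<open>auto intro!: divide_left_mono simp: field_simps\<close>)
    then show False using \<open>(\<Prod>j=1..n. real j / (real j + a)) = _\<close> by simp
  next
    case False
    then have "(\<Prod>j=1..n. real j / (real j + a)) < (\<Prod>j=1..n. real j / (real j + 1))"
      using assms by (intro prod_mono_strict[OF \<open>1 \<in> {1..n}\<close>]) (auto intro!: divide_left_mono simp: field_simps)
    then show False using \<open>(\<Prod>j=1..n. real j / (real j + a)) = _\<close> by simp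
  qed
qed

locale smoothing_fixed_point =
  fixes M :: "'a measure" and m :: nat and lam :: complex
    and Z :: "'a \<Rightarrow> complex" and Zs :: "nat \<Rightarrow> 'a \<Rightarrow> complex"
    and \<tau> :: "nat \<Rightarrow> 'a \<Rightarrow> real" and T :: "'a \<Rightarrow> real"
  assumes prob_M: "prob_space M"
    and m_ge_2: "m \<ge> 2"
    and lam_ne_1: "lam \<noteq> 1" and Re_lam_pos: "Re lam > 0"
    and tau_exponential: "\<And>j. j \<in> {1..m-1} \<Longrightarrow> distributed M lborel (\<tau> j) (exponential_density (real j))"
    and T_eq: "\<And>\<omega>. T \<omega> = (\<Sum>j=1..m-1. \<tau> j \<omega>)"
    and Z_measurable: "Z \<in> borel_measurable M"
    and Z_integrable: "integrable M Z"
    and Z_mean_nonzero: "integral\<^sup>L M Z \<noteq> 0"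
    and Zs_measurable: "\<And>j. j \<in> {1..m} \<Longrightarrow> Zs j \<in> borel_measurable M"
    and Zs_law: "\<And>j. j \<in> {1..m} \<Longrightarrow> distr M borel (Zs j) = distr M borel Z"
    and indep: "prob_space.indep_vars M (\<lambda>_. borel)
           (\<lambda>i. case i of Inl j \<Rightarrow> Zs j | Inr j \<Rightarrow> (\<lambda>\<omega>. complex_of_real (\<tau> j \<omega>)))
           (Inl ` {1..m} \<union> Inr ` {1..m-1})"
    and fixed_point: "distr M borel Z =
         distr M borel (\<lambda>\<omega>. exp (- lam * complex_of_real (T \<omega>)) * (\<Sum>j=1..m. Zs j \<omega>))"
begin

sublocale prob_space M by (rule prob_M)

definition copies :: "(nat + nat) set" where "copies = Inl ` {1..m}"
definition times :: "(nat + nat) set" where "times = Inr ` {1..m-1}"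
definition indices :: "(nat + nat) set" where "indices = copies \<union> times"

text \<open>The independent family of the hypothesis, made total by the junk value 0 outside its index set.\<close>
definition family :: "nat + nat \<Rightarrow> 'a \<Rightarrow> complex" where
  "family i = (if i \<in> indices then (case i of Inl j \<Rightarrow> Zs j | Inr j \<Rightarrow> (\<lambda>\<omega>. complex_of_real (\<tau> j \<omega>))) else (\<lambda>_. 0))"

definition law :: "nat + nat \<Rightarrow> complex measure" where "law i = distr M borel (family i)"
definition \<mu> :: "complex measure" where "\<mu> = distr M borel Z"
definition P :: "real measure" where "P = distr M borel T"

definition time_sum :: "(nat + nat \<Rightarrow> complex) \<Rightarrow> real" where
  "time_sum y = (\<Sum>j=1..m-1. Re (y (Inr j)))"
definition copy_sum :: "(nat + nat \<Rightarrow> complex) \<Rightarrow> complex" where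
  "copy_sum x = (\<Sum>j=1..m. x (Inl j))"
definition rhs :: "'a \<Rightarrow> complex" where
  "rhs \<omega> = exp (- lam * complex_of_real (T \<omega>)) * (\<Sum>j=1..m. Zs j \<omega>)"

lemma borel_measurable_tau [measurable]: "j \<in> {1..m-1} \<Longrightarrow> \<tau> j \<in> borel_measurable M"
  using distributed_measurable[OF tau_exponential] by simp

lemma borel_measurable_T [measurable]: "T \<in> borel_measurable M"
proof -
  have "(\<lambda>\<omega>. \<Sum>j=1..m-1. \<tau> j \<omega>) \<in> borel_measurable M" by measurable
  then show ?thesis by (simp add: T_eq[abs_def])
qed

lemma borel_measurable_family [measurable]: "family i \<in> borel_measurable M"
  by (auto simp: family_def indices_def copies_def times_def split: sum.split intro: Zs_measurable)

lemma borel_measurable_rhs [measurable]: "rhs \<in> borel_measurable M"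
  unfolding rhs_def using Zs_measurable by measurable

lemma prob_space_law: "prob_space (law i)"
  unfolding law_def by (rule prob_space_distr) simp

lemma sets_law_family [simp, measurable_cong]: "sets (law i) = sets borel"
  by (simp add: law_def)

lemma product_sigma_finite_law: "product_sigma_finite law"
  unfolding product_sigma_finite_def using prob_space_law by (simp add: prob_space_imp_sigma_finite)

lemma prob_space_PiM_law: "prob_space (PiM J law)"
  by (intro prob_space_PiM prob_space_law)

lemma complex_law_\<mu>: "complex_law \<mu>"
  unfolding complex_law_def complex_law_axioms_def \<mu>_def by (auto intro: prob_space_distr Z_measurable)

lemma prob_space_P: "prob_space P" and sets_P: "sets P = sets borel"
  unfolding P_def by (auto intro!: prob_space_distr)

lemma law_copy: "i \<in> copies \<Longrightarrow> law i = \<mu>"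
  by (auto simp: law_def family_def indices_def copies_def \<mu>_def Zs_law)

lemma law_eq_rhs: "\<mu> = distr M borel rhs"
  unfolding \<mu>_def rhs_def by (rule fixed_point)

lemma finite_index_sets [simp]: "finite copies" "finite times" "finite indices"
  by (auto simp: copies_def times_def indices_def)

lemma indices_nonempty: "indices \<noteq> {}"
  using m_ge_2 by (auto simp: indices_def copies_def)

lemma times_subset_indices: "times \<subseteq> indices"
  by (simp add: indices_def)

lemma card_copies: "card copies = m"
  by (simp add: copies_def card_image)

lemma indep_family: "indep_vars (\<lambda>_. borel) family indices"
  using indep unfolding indices_def copies_def times_def
  by (rule indep_vars_cong[THEN iffD1, rotated -1]) (auto simp: family_def indices_def copies_def times_def)

lemma distr_family_eq_PiM:
  assumes "J \<subseteq> indices" "J \<noteq> {}"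
  shows "distr M (PiM J (\<lambda>_. borel)) (\<lambda>\<omega>. \<lambda>i\<in>J. family i \<omega>) = PiM J law"
  using indep_vars_iff_distr_eq_PiM[OF assms(2), of family "\<lambda>_. borel"] indep_vars_subset[OF indep_family assms(1)]
  by (simp add: law_def[abs_def])

lemma borel_measurable_component:
  assumes "i \<in> J" "\<And>i. sets (M' i) = sets borel" "f \<in> borel_measurable borel"
  shows "(\<lambda>x. f (x i)) \<in> borel_measurable (PiM J M')"
  using measurable_compose[OF measurable_component_singleton[OF assms(1), of M']] assms(2,3)
  by (simp add: measurable_cong_sets[OF assms(2) refl])

lemma borel_measurable_time_sum [measurable]:
  "times \<subseteq> J \<Longrightarrow> (\<And>i. sets (M' i) = sets borel) \<Longrightarrow> time_sum \<in> borel_measurable (PiM J M')"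
  unfolding time_sum_def by (intro borel_measurable_sum borel_measurable_component) (auto simp: times_def)

lemma borel_measurable_copy_sum [measurable]:
  "copies \<subseteq> J \<Longrightarrow> (\<And>i. sets (M' i) = sets borel) \<Longrightarrow> copy_sum \<in> borel_measurable (PiM J M')"
  unfolding copy_sum_def
  by (intro borel_measurable_sum borel_measurable_component[where f="\<lambda>z. z"]) (auto simp: copies_def)

lemma time_sum_family: "time_sum (\<lambda>i\<in>J. family i \<omega>) = T \<omega>" if "times \<subseteq> J" "J \<subseteq> indices"
  using that by (auto simp: time_sum_def T_eq indices_def times_def family_def intro!: sum.cong)

lemma copy_sum_family: "copy_sum (\<lambda>i\<in>indices. family i \<omega>) = (\<Sum>j=1..m. Zs j \<omega>)"
  by (auto simp: copy_sum_def indices_def copies_def family_def intro!: sum.cong)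

lemma time_sum_merge: "time_sum (merge times copies (y, x)) = time_sum y"
  and copy_sum_merge: "copy_sum (merge times copies (y, x)) = copy_sum x"
  by (auto simp: time_sum_def copy_sum_def merge_def copies_def times_def intro!: sum.cong)

lemma integral_P:
  fixes h :: "real \<Rightarrow> 'b::{banach, second_countable_topology}"
  assumes [measurable]: "h \<in> borel_measurable borel"
  shows "(LINT s|P. h s) = (LINT y|PiM times law. h (time_sum y))"
proof -
  have "times \<noteq> {}" using m_ge_2 by (auto simp: times_def)
  have "(LINT s|P. h s) = (LINT \<omega>|M. h (time_sum (\<lambda>i\<in>times. family i \<omega>)))"
    unfolding P_def by (subst integral_distr) (auto simp: time_sum_family indices_def)
  also have "\<dots> = (LINT y|distr M (PiM times (\<lambda>_. borel)) (\<lambda>\<omega>. \<lambda>i\<in>times. family i \<omega>). h (time_sum y))"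
  proof (rule integral_distr[symmetric])
    show "(\<lambda>\<omega>. \<lambda>i\<in>times. family i \<omega>) \<in> M \<rightarrow>\<^sub>M PiM times (\<lambda>_. borel)"
      by (rule measurable_restrict) simp
  qed measurable
  finally show ?thesis
    using \<open>times \<noteq> {}\<close> by (simp add: distr_family_eq_PiM indices_def)
qed

lemma integral_family_fold:
  fixes g :: "(nat + nat \<Rightarrow> complex) \<Rightarrow> 'b::{banach, second_countable_topology}"
  assumes g: "g \<in> borel_measurable (PiM indices (\<lambda>_. borel))" and "integrable (PiM indices law) g"
  shows "(LINT \<omega>|M. g (\<lambda>i\<in>indices. family i \<omega>))
           = (LINT y|PiM times law. LINT x|PiM copies law. g (merge times copies (y, x)))"
proof -
  have "indices \<noteq> {}" using m_ge_2 by (auto simp: indices_def copies_def)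
  have "(LINT \<omega>|M. g (\<lambda>i\<in>indices. family i \<omega>))
      = (LINT x|distr M (PiM indices (\<lambda>_. borel)) (\<lambda>\<omega>. \<lambda>i\<in>indices. family i \<omega>). g x)"
    by (rule integral_distr[symmetric, OF _ g], rule measurable_restrict) simp
  also have "\<dots> = (LINT x|PiM (times \<union> copies) law. g x)"
    using \<open>indices \<noteq> {}\<close> by (simp add: distr_family_eq_PiM Un_commute indices_def)
  also have "\<dots> = (LINT y|PiM times law. LINT x|PiM copies law. g (merge times copies (y, x)))"
    using assms(2) product_sigma_finite.product_integral_fold[OF product_sigma_finite_law, of times copies g]
    by (auto simp: indices_def Un_commute copies_def times_def)
  finally show ?thesis .
qed

lemma integral_copies_exp_cinner:
  "(LINT x|PiM copies law. exp (\<i> * complex_of_real (cinner t (e * copy_sum x)))) = char_fun \<mu> (cnj e * t) ^ m"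
proof -
  interpret \<mu>: complex_law \<mu> by (rule complex_law_\<mu>)
  have "exp (\<i> * complex_of_real (cinner t (e * copy_sum x)))
      = (\<Prod>i\<in>copies. exp (\<i> * complex_of_real (cinner (cnj e * t) (x i))))" for x
    by (simp add: copy_sum_def copies_def cinner_mult_right cinner_sum_right sum_distrib_left exp_sum
        prod.reindex)
  then have "(LINT x|PiM copies law. exp (\<i> * complex_of_real (cinner t (e * copy_sum x))))
      = (\<Prod>i\<in>copies. LINT z|law i. exp (\<i> * complex_of_real (cinner (cnj e * t) z)))"
    by (simp only:)
       (rule product_sigma_finite.product_integral_prod[OF product_sigma_finite_law finite_index_sets(1)],
        simp add: law_copy \<mu>.integrable_char_fun_integrand)
  also have "\<dots> = char_fun \<mu> (cnj e * t) ^ m"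
    by (simp add: law_copy char_fun_def card_copies cong: prod.cong)
  finally show ?thesis .
qed

lemma char_fun_fixed_point:
  "char_fun \<mu> t = (LINT s|P. char_fun \<mu> (exp (- cnj lam * complex_of_real s) * t) ^ m)"
proof -
  interpret \<mu>: complex_law \<mu> by (rule complex_law_\<mu>)
  define g where "g x = exp (\<i> * complex_of_real (cinner t (exp (- lam * complex_of_real (time_sum x)) * copy_sum x)))"
    for x
  have meas_g: "g \<in> borel_measurable (PiM indices law)" "g \<in> borel_measurable (PiM indices (\<lambda>_. borel))"
    unfolding g_def by (measurable; auto simp: indices_def)+
  have "char_fun \<mu> t = (LINT \<omega>|M. g (\<lambda>i\<in>indices. family i \<omega>))"
    unfolding char_fun_def law_eq_rhs g_def
    by (subst integral_distr) (auto simp: rhs_def time_sum_family copy_sum_family times_subset_indices)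
  also have "\<dots> = (LINT y|PiM times law. LINT x|PiM copies law. g (merge times copies (y, x)))"
  proof (rule integral_family_fold[OF meas_g(2)])
    interpret \<Pi>: prob_space "PiM indices law" by (rule prob_space_PiM_law)
    show "integrable (PiM indices law) g"
      using meas_g(1) by (intro \<Pi>.integrable_const_bound[where B=1]) (auto simp: g_def)
  qed
  also have "\<dots> = (LINT y|PiM times law. char_fun \<mu> (exp (- cnj lam * complex_of_real (time_sum y)) * t) ^ m)"
    by (simp add: g_def time_sum_merge copy_sum_merge integral_copies_exp_cinner exp_cnj)
  also have "\<dots> = (LINT s|P. char_fun \<mu> (exp (- cnj lam * complex_of_real s) * t) ^ m)"
    by (rule integral_P[symmetric]) measurable
  finally show ?thesis .
qed

lemma char_fun_contraction: "char_fun_contraction \<mu> P lam m"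
proof -
  interpret \<mu>: complex_law \<mu> by (rule complex_law_\<mu>)
  interpret P: prob_space P by (rule prob_space_P)
  show ?thesis
  proof (unfold_locales)
    fix t
    show "cmod (char_fun \<mu> t) \<le> (LINT s|P. cmod (char_fun \<mu> (exp (- cnj lam * complex_of_real s) * t)) ^ m)"
      by (subst char_fun_fixed_point) (rule order_trans[OF integral_norm_bound], simp add: norm_power)
  qed (use sets_P m_ge_2 in auto)
qed

lemma integrable_\<mu>: "integrable \<mu> (\<lambda>z. z)"
  unfolding \<mu>_def using Z_integrable by (subst integrable_distr_eq) (auto intro: Z_measurable)

lemma integral_\<mu>: "(LINT z|\<mu>. z) = integral\<^sup>L M Z"
  unfolding \<mu>_def by (rule integral_distr) (auto intro: Z_measurable)

lemma integral_copy_sum: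
  shows "integrable (PiM copies law) copy_sum"
    and "(LINT x|PiM copies law. copy_sum x) = of_nat m * (LINT z|\<mu>. z)"
proof -
  have id_meas: "(\<lambda>z. z) \<in> borel_measurable \<mu>"
    by (simp add: \<mu>_def)
  have int_i: "integrable (PiM copies law) (\<lambda>x. x i)"
    and integral_i: "(LINT x|PiM copies law. x i) = (LINT z|\<mu>. z)" if "i \<in> copies" for i
  proof -
    have meas: "(\<lambda>x. x i) \<in> measurable (PiM copies law) \<mu>"
      using measurable_component_singleton[OF that, of law] law_copy[OF that] by simp
    have component: "distr (PiM copies law) \<mu> (\<lambda>x. x i) = \<mu>"
      using distr_PiM_component[of copies law i] prob_space_law that law_copy[OF that] by simp
    show "integrable (PiM copies law) (\<lambda>x. x i)"
      using integrable_distr_eq[OF meas id_meas] integrable_\<mu> component by simp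
    show "(LINT x|PiM copies law. x i) = (LINT z|\<mu>. z)"
      using integral_distr[OF meas id_meas] component by simp
  qed
  have copy_sum_eq: "copy_sum x = (\<Sum>i\<in>copies. x i)" for x
    unfolding copy_sum_def copies_def by (simp add: sum.reindex)
  show "integrable (PiM copies law) copy_sum"
    unfolding copy_sum_eq[abs_def] using int_i by auto
  show "(LINT x|PiM copies law. copy_sum x) = of_nat m * (LINT z|\<mu>. z)"
    unfolding copy_sum_eq using int_i integral_i by (simp add: card_copies)
qed

lemma mean_fixed_point: "of_nat m * (LINT s|P. exp (- lam * complex_of_real s)) = 1"
proof -
  define g where "g x = exp (- lam * complex_of_real (time_sum x)) * copy_sum x" for x
  have meas_g: "g \<in> borel_measurable (PiM indices (\<lambda>_. borel))"
    unfolding g_def by measurable (auto simp: indices_def)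
  have rhs_g: "rhs = (\<lambda>\<omega>. g (\<lambda>i\<in>indices. family i \<omega>))"
    by (simp add: fun_eq_iff g_def rhs_def time_sum_family copy_sum_family times_subset_indices)
  have "integrable M rhs"
    using integrable_\<mu> unfolding law_eq_rhs by (subst (asm) integrable_distr_eq) auto
  have meas_restrict: "(\<lambda>\<omega>. \<lambda>i\<in>indices. family i \<omega>) \<in> M \<rightarrow>\<^sub>M PiM indices (\<lambda>_. borel)"
    by (rule measurable_restrict) simp
  have "integrable (distr M (PiM indices (\<lambda>_. borel)) (\<lambda>\<omega>. \<lambda>i\<in>indices. family i \<omega>)) g"
    using \<open>integrable M rhs\<close> unfolding rhs_g by (subst integrable_distr_eq[OF meas_restrict meas_g])
  then have "integrable (PiM indices law) g"
    by (simp add: distr_family_eq_PiM indices_nonempty)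
  have "(LINT z|\<mu>. z) = (LINT \<omega>|M. g (\<lambda>i\<in>indices. family i \<omega>))"
    unfolding law_eq_rhs rhs_g using measurable_comp[OF meas_restrict meas_g] by (subst integral_distr) (auto simp: comp_def)
  also have "\<dots> = (LINT y|PiM times law. LINT x|PiM copies law. g (merge times copies (y, x)))"
    by (rule integral_family_fold[OF meas_g]) fact
  also have "\<dots> = (LINT y|PiM times law. exp (- lam * complex_of_real (time_sum y)) * (of_nat m * (LINT z|\<mu>. z)))"
    by (simp add: g_def time_sum_merge copy_sum_merge integral_copy_sum(2))
  also have "\<dots> = (LINT s|P. exp (- lam * complex_of_real s)) * (of_nat m * (LINT z|\<mu>. z))"
    using integral_P[of "\<lambda>s. exp (- lam * complex_of_real s)"] by simp
  finally have "(LINT z|\<mu>. z) * 1 = (LINT z|\<mu>. z) * (of_nat m * (LINT s|P. exp (- lam * complex_of_real s)))"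
    by (simp add: algebra_simps)
  then show ?thesis
    using Z_mean_nonzero by (simp add: integral_\<mu>)
qed

lemma indep_time_family: "indep_vars (\<lambda>_. borel) (\<lambda>i \<omega>. Re (family i \<omega>)) times"
  using indep_vars_compose2[OF indep_vars_subset[OF indep_family times_subset_indices], of "\<lambda>_. Re" "\<lambda>_. borel"]
  by simp

lemma Re_family_time: "j \<in> {1..m-1} \<Longrightarrow> Re (family (Inr j) \<omega>) = \<tau> j \<omega>"
  by (simp add: family_def indices_def times_def)

lemma integral_exp_tau:
  assumes "j \<in> {1..m-1}" and "0 < a"
  shows "integrable M (\<lambda>\<omega>. exp (- a * \<tau> j \<omega>))"
    and "(LINT \<omega>|M. exp (- a * \<tau> j \<omega>)) = real j / (real j + a)"
proof -
  have "0 < real j" using assms(1) by simp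
  note density_nonneg = exponential_density_nonneg[OF \<open>0 < real j\<close>]
  show "integrable M (\<lambda>\<omega>. exp (- a * \<tau> j \<omega>))"
    using distributed_integrable[OF tau_exponential[OF assms(1)], of "\<lambda>x. exp (- a * x)"]
      laplace_exponential_density(1)[OF \<open>0 < real j\<close> assms(2)] density_nonneg by simp
  have "(LINT \<omega>|M. exp (- a * \<tau> j \<omega>)) = (\<integral>x. exponential_density (real j) x * exp (- a * x) \<partial>lborel)"
    using distributed_integral[OF tau_exponential[OF assms(1)], of "\<lambda>x. exp (- a * x)"] density_nonneg by simp
  also have "\<dots> = real j / (real j + a)"
    by (rule laplace_exponential_density(2)[OF \<open>0 < real j\<close> assms(2)])
  finally show "(LINT \<omega>|M. exp (- a * \<tau> j \<omega>)) = real j / (real j + a)" .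
qed

lemma laplace_P:
  assumes "0 < a"
  shows "(LINT s|P. exp (- a * s)) = (\<Prod>j=1..m-1. real j / (real j + a))"
proof -
  have exp_T: "exp (- a * T \<omega>) = (\<Prod>i\<in>times. exp (- a * Re (family i \<omega>)))" for \<omega>
  proof -
    have "exp (- a * T \<omega>) = (\<Prod>j=1..m-1. exp (- a * \<tau> j \<omega>))"
      by (simp add: T_eq sum_distrib_left exp_sum[symmetric])
    also have "\<dots> = (\<Prod>i\<in>times. exp (- a * Re (family i \<omega>)))"
      unfolding times_def by (subst prod.reindex) (auto simp: Re_family_time)
    finally show ?thesis .
  qed
  have int_i: "integrable M (\<lambda>\<omega>. exp (- a * Re (family i \<omega>)))" if "i \<in> times" for i
    using that integral_exp_tau(1)[OF _ assms] by (auto simp: times_def Re_family_time)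
  have "(LINT s|P. exp (- a * s)) = (LINT \<omega>|M. (\<Prod>i\<in>times. exp (- a * Re (family i \<omega>))))"
    unfolding P_def exp_T[symmetric] by (rule integral_distr) simp_all
  also have "\<dots> = (\<Prod>i\<in>times. LINT \<omega>|M. exp (- a * Re (family i \<omega>)))"
    using indep_vars_compose2[OF indep_time_family, of "\<lambda>_ x. exp (- a * x)" "\<lambda>_. borel"] int_i
    by (intro indep_vars_lebesgue_integral) auto
  also have "\<dots> = (\<Prod>j=1..m-1. LINT \<omega>|M. exp (- a * \<tau> j \<omega>))"
    unfolding times_def by (subst prod.reindex) (auto simp: Re_family_time intro!: prod.cong)
  also have "\<dots> = (\<Prod>j=1..m-1. real j / (real j + a))"
    by (rule prod.cong[OF refl]) (rule integral_exp_tau(2)[OF _ assms])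
  finally show ?thesis .
qed

lemma Im_lam_nonzero: "Im lam \<noteq> 0"
proof
  assume "Im lam = 0"
  define a where "a = Re lam"
  have "0 < a" using Re_lam_pos by (simp add: a_def)
  have lam_eq: "lam = complex_of_real a" using \<open>Im lam = 0\<close> by (simp add: a_def complex_eq_iff)
  then have "a \<noteq> 1" using lam_ne_1 by auto
  have "exp (- lam * complex_of_real s) = complex_of_real (exp (- a * s))" for s
    unfolding lam_eq by (simp flip: exp_of_real)
  then have "complex_of_real (real m * (LINT s|P. exp (- a * s))) = 1"
    using mean_fixed_point by simp
  then have "real (Suc (m - 1)) * (\<Prod>j=1..m-1. real j / (real j + a)) = 1"
    using m_ge_2 laplace_P[OF \<open>0 < a\<close>] by (simp only: of_real_eq_1_iff Suc_diff_1)
  moreover have "1 \<le> m - 1" using m_ge_2 by simp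
  ultimately show False
    using Suc_mult_prod_ratio_ne_1[OF \<open>0 < a\<close> \<open>a \<noteq> 1\<close>] by blast
qed

lemma indep_tau_1_rest: "indep_var borel (\<tau> 1) borel (\<lambda>\<omega>. \<Sum>j=2..m-1. \<tau> j \<omega>)"
proof -
  have "indep_vars (\<lambda>_. borel) (\<lambda>i \<omega>. Re (family i \<omega>)) (insert (Inr 1) (Inr ` {2..m-1}))"
    using m_ge_2 by (intro indep_vars_subset[OF indep_time_family]) (auto simp: times_def)
  then have "indep_var borel (\<lambda>\<omega>. Re (family (Inr 1) \<omega>)) borel (\<lambda>\<omega>. \<Sum>i\<in>Inr ` {2..m-1}. Re (family i \<omega>))"
    by (rule indep_vars_sum[rotated 2]) auto
  moreover have "(\<lambda>\<omega>. Re (family (Inr 1) \<omega>)) = \<tau> 1"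
    using m_ge_2 by (simp add: fun_eq_iff Re_family_time)
  moreover have "(\<lambda>\<omega>. \<Sum>i\<in>Inr ` {2..m-1}. Re (family i \<omega>)) = (\<lambda>\<omega>. \<Sum>j=2..m-1. \<tau> j \<omega>)"
    by (subst sum.reindex) (auto simp: fun_eq_iff Re_family_time intro!: sum.cong)
  ultimately show ?thesis by simp
qed

lemma P_eq_convolution: "P = (density lborel (exponential_density 1) \<star> distr M borel (\<lambda>\<omega>. \<Sum>j=2..m-1. \<tau> j \<omega>))"
proof -
  have "T = (\<lambda>\<omega>. \<tau> 1 \<omega> + (\<Sum>j=2..m-1. \<tau> j \<omega>))"
    using m_ge_2 by (simp add: fun_eq_iff T_eq sum.atLeast_Suc_atMost numeral_2_eq_2)
  moreover have "distr M borel (\<lambda>\<omega>. \<tau> 1 \<omega> + (\<Sum>j=2..m-1. \<tau> j \<omega>))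
      = (distr M borel (\<tau> 1) \<star> distr M borel (\<lambda>\<omega>. \<Sum>j=2..m-1. \<tau> j \<omega>))"
    using m_ge_2 by (intro sum_indep_random_variable indep_tau_1_rest) auto
  ultimately have "P = (distr M borel (\<tau> 1) \<star> distr M borel (\<lambda>\<omega>. \<Sum>j=2..m-1. \<tau> j \<omega>))"
    unfolding P_def by simp
  moreover have "distr M borel (\<tau> 1) = density lborel (exponential_density 1)"
  proof -
    have "1 \<in> {1..m-1}" using m_ge_2 by simp
    have "distr M borel (\<tau> 1) = distr M lborel (\<tau> 1)" by (rule distr_cong) simp_all
    also have "\<dots> = density lborel (exponential_density 1)"
      using distributed_distr_eq_density[OF tau_exponential[OF \<open>1 \<in> {1..m-1}\<close>]] by simp
    finally show ?thesis .
  qed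
  ultimately show ?thesis by simp
qed

lemma spiral_nondegenerate_P: "spiral_nondegenerate P lam"
  unfolding P_eq_convolution
  using spiral_nondegenerate_exponential[OF Re_lam_pos Im_lam_nonzero]
  by (rule spiral_nondegenerate_convolution) (auto intro: prob_space_exponential_density prob_space_distr)

lemma AE_T_eq_if_law_dirac:
  assumes "AE z in \<mu>. z = c"
  shows "AE \<omega> in M. T \<omega> = ln (real m) / Re lam"
proof -
  interpret \<mu>: complex_law \<mu> by (rule complex_law_\<mu>)
  have "(LINT z|\<mu>. z) = c"
    using integral_cong_AE[of "\<lambda>z. z" \<mu> "\<lambda>_. c"] assms by (simp add: \<mu>.prob_space)
  then have "c \<noteq> 0" using Z_mean_nonzero by (simp add: integral_\<mu>)
  have "AE \<omega> in M. rhs \<omega> = c"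
    using assms unfolding law_eq_rhs by (rule AE_distrD[rotated]) simp
  moreover have "AE \<omega> in M. Zs j \<omega> = c" if "j \<in> {1..m}" for j
    using assms unfolding \<mu>_def Zs_law[OF that, symmetric]
    by (rule AE_distrD[rotated]) (rule Zs_measurable[OF that])
  then have "AE \<omega> in M. \<forall>j\<in>{1..m}. Zs j \<omega> = c"
    by (intro AE_finite_allI) auto
  ultimately show ?thesis
  proof eventually_elim
    fix \<omega> assume "rhs \<omega> = c" and "\<forall>j\<in>{1..m}. Zs j \<omega> = c"
    then have "(exp (- lam * complex_of_real (T \<omega>)) * of_nat m) * c = 1 * c"
      by (simp add: rhs_def mult.assoc)
    then have "cmod (exp (- lam * complex_of_real (T \<omega>)) * of_nat m) = 1"
      using \<open>c \<noteq> 0\<close> by (metis mult_right_cancel norm_one)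
    then have "exp (- Re lam * T \<omega>) * real m = 1"
      by (simp only: norm_mult norm_of_nat) simp
    then have "exp (- Re lam * T \<omega>) = exp (- ln (real m))"
      using m_ge_2 by (simp add: exp_minus field_simps)
    then show "T \<omega> = ln (real m) / Re lam"
      using Re_lam_pos by (simp add: field_simps)
  qed
qed

lemma law_not_dirac: "\<not> (\<exists>c. AE z in \<mu>. z = c)"
proof
  assume "\<exists>c. AE z in \<mu>. z = c"
  then have "AE s in P. s = ln (real m) / Re lam"
    unfolding P_def by (subst AE_distr_iff) (auto dest: AE_T_eq_if_law_dirac)
  with not_AE_eq_const_if_spiral_nondegenerate[OF spiral_nondegenerate_P] show False by blast
qed

theorem circle_sup_tendsto_0:
  "((\<lambda>r. Sup {cmod (LINT \<omega>|M. exp (\<i> * complex_of_real (cinner t (Z \<omega>)))) | t. cmod t = r}) \<longlongrightarrow> 0) at_top"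
proof -
  interpret C: char_fun_contraction \<mu> P lam m by (rule char_fun_contraction)
  have "char_fun \<mu> t = (LINT \<omega>|M. exp (\<i> * complex_of_real (cinner t (Z \<omega>))))" for t
    unfolding char_fun_def \<mu>_def by (rule integral_distr) (auto intro: Z_measurable)
  with C.circle_sup_char_fun_tendsto_0[OF spiral_nondegenerate_P law_not_dirac] show ?thesis
    by simp
qed

end

theorem lemma7p3:
  fixes M :: "'a measure" and m :: nat and lam :: complex
    and Z :: "'a \<Rightarrow> complex" and Zs :: "nat \<Rightarrow> 'a \<Rightarrow> complex"
    and \<tau> :: "nat \<Rightarrow> 'a \<Rightarrow> real" and T :: "'a \<Rightarrow> real"
  assumes "prob_space M"
    and "m \<ge> 2"
    and "lam \<noteq> 1" and "Re lam > 0"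
    and "\<And>j. j \<in> {1..m-1} \<Longrightarrow> distributed M lborel (\<tau> j) (exponential_density (real j))"
    and "\<And>\<omega>. T \<omega> = (\<Sum>j=1..m-1. \<tau> j \<omega>)"
    and "Z \<in> borel_measurable M"
    and "integrable M Z"
    and "integral\<^sup>L M Z \<noteq> 0"
    and "\<And>j. j \<in> {1..m} \<Longrightarrow> Zs j \<in> borel_measurable M"
    and "\<And>j. j \<in> {1..m} \<Longrightarrow> distr M borel (Zs j) = distr M borel Z"
    and "prob_space.indep_vars M (\<lambda>_. borel)
           (\<lambda>i. case i of Inl j \<Rightarrow> Zs j | Inr j \<Rightarrow> (\<lambda>\<omega>. complex_of_real (\<tau> j \<omega>)))
           (Inl ` {1..m} \<union> Inr ` {1..m-1})"
    and "distr M borel Z =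
         distr M borel (\<lambda>\<omega>. exp (- lam * complex_of_real (T \<omega>)) * (\<Sum>j=1..m. Zs j \<omega>))"
  shows "((\<lambda>r. Sup {cmod (LINT \<omega>|M. exp (\<i> * complex_of_real (cinner t (Z \<omega>)))) | t. cmod t = r})
           \<longlongrightarrow> 0) at_top"
proof -
  interpret smoothing_fixed_point M m lam Z Zs \<tau> T
    using assms by (rule smoothing_fixed_point.intro)
  show ?thesis by (rule circle_sup_tendsto_0)
qed

end
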